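(* Let $T\in(\mathbb{C}^n)^{\otimes3}$ be an $r$-diagonalisable symmetric tensor, $T=\sum_{i=1}^ru_i^{\otimes3}$ with the $u_i$ linearly independent, with $\kappa(T)\le B$, and let $T'\in(\mathbb{C}^n)^{\otimes3}$ satisfy $\|T-T'\|_F\le\delta$. Let $P\in\mathbb{C}^{n\times r}$ be a semi-unitary matrix whose column span is $\mathrm{span}\{u_1,\dots,u_r\}$, and let $P'\in\mathbb{C}^{n\times r}$ satisfy $\|P-P'\|\le\varepsilon_1<1$. Let $S=(\overline P\otimes\overline P\otimes\overline P).T$ and $S'=(\overline{P'}\otimes\overline{P'}\otimes\overline{P'}).T'$. Then $$\|S-S'\|_F\le 7\varepsilon_1r^{7/2}B^{3/2}+8\delta r^{3/2}.$$
   Context: $\kappa(T)=\|U\|_F^2+\|U^\dagger\|_F^2$ where $U$ has rows $u_1,\dots,u_r$ and $U^\dagger$ is the Moore–Penrose pseudoinverse (independent of the decomposition). Semi-unitary means $P^*P=I_r$; $\overline P$ is the entrywise conjugate. $\|P-P'\|$ is the operator norm; $\|\cdot\|_F$ on tensors is the Frobenius norm. For $M\in\mathbb{C}^{n\times r}$, $\big((M\otimes M\otimes M).T\big)_{i_1i_2i_3}=\sum_{j_1,j_2,j_3=1}^nM_{j_1i_1}M_{j_2i_2}M_{j_3i_3}T_{j_1j_2j_3}$. *)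

theory Defs
  imports "HOL-Analysis.Analysis" "Jordan_Normal_Form.Matrix"
begin

text \<open>Matrices are Jordan_Normal_Form matrices over complex numbers;
 order-3 tensors in (C^d)^{\<otimes>3} are functions nat => nat => nat => complex,
 of which only the entries with all indices < d are relevant.\<close>

definition cconj_mat :: "complex mat \<Rightarrow> complex mat" where
  "cconj_mat A = map_mat cnj A"

definition cadj :: "complex mat \<Rightarrow> complex mat" where
  "cadj A = transpose_mat (map_mat cnj A)"

definition frob_mat :: "complex mat \<Rightarrow> real" where
  "frob_mat A = sqrt (\<Sum>i<dim_row A. \<Sum>j<dim_col A. (cmod (A $$ (i,j)))\<^sup>2)"

definition vnorm :: "complex vec \<Rightarrow> real" where
  "vnorm x = sqrt (\<Sum>i<dim_vec x. (cmod (x $ i))\<^sup>2)"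

definition op_norm :: "complex mat \<Rightarrow> real" where
  "op_norm A = Sup {vnorm (A *\<^sub>v x) | x. x \<in> carrier_vec (dim_col A) \<and> vnorm x \<le> 1}"

definition pinv :: "complex mat \<Rightarrow> complex mat" where
  "pinv A = (THE X. X \<in> carrier_mat (dim_col A) (dim_row A) \<and>
      A * X * A = A \<and> X * A * X = X \<and> cadj (A * X) = A * X \<and> cadj (X * A) = X * A)"

text \<open>kappa for the decomposition given by the rows of U.\<close>
definition kappa :: "complex mat \<Rightarrow> real" where
  "kappa U = (frob_mat U)\<^sup>2 + (frob_mat (pinv U))\<^sup>2"

definition frob_tensor :: "nat \<Rightarrow> (nat \<Rightarrow> nat \<Rightarrow> nat \<Rightarrow> complex) \<Rightarrow> real" where
  "frob_tensor d T = sqrt (\<Sum>i<d. \<Sum>j<d. \<Sum>k<d. (cmod (T i j k))\<^sup>2)"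

definition tensor_act3 :: "complex mat \<Rightarrow> (nat \<Rightarrow> nat \<Rightarrow> nat \<Rightarrow> complex) \<Rightarrow> (nat \<Rightarrow> nat \<Rightarrow> nat \<Rightarrow> complex)" where
  "tensor_act3 M T = (\<lambda>i1 i2 i3. \<Sum>j1<dim_row M. \<Sum>j2<dim_row M. \<Sum>j3<dim_row M.
      M $$ (j1,i1) * M $$ (j2,i2) * M $$ (j3,i3) * T j1 j2 j3)"

end

theory Submission
  imports Defs "HOL-Library.Function_Algebras"
begin

text \<open>With A = P^* and A' = P'^* (as r x n matrices), S - S' telescopes into
  (A - A', A, A).T + (A', A - A', A).T + (A', A', A - A').T + (A', A', A').(T - T').
  Multiplying a tensor in each mode by matrices of operator norms at most C1, C2, C3 scales its
  Frobenius norm by at most C1 C2 C3, and ||A|| = 1, ||A - A'|| \<le> \<epsilon>, ||A'|| \<le> 1 + \<epsilon>. Hence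
  ||S - S'|| \<le> ((1 + \<epsilon>)^3 - 1) ||T|| + (1 + \<epsilon>)^3 \<delta> \<le> 7 \<epsilon> ||T|| + 8 \<delta>, while
  ||T|| \<le> \<Sum>l ||u_l||^3 \<le> ||U||_F^3 \<le> \<kappa>(T)^(3/2).\<close>

lemma L2_set_squared: "(L2_set f A)\<^sup>2 = (\<Sum>i\<in>A. (f i)\<^sup>2)"
  by (simp add: L2_set_def sum_nonneg)

definition op_norm_le :: "nat \<Rightarrow> nat \<Rightarrow> (nat \<Rightarrow> nat \<Rightarrow> complex) \<Rightarrow> real \<Rightarrow> bool" where
  "op_norm_le m n A C \<longleftrightarrow> 0 \<le> C \<and>
     (\<forall>y. L2_set (\<lambda>i. cmod (\<Sum>j<n. A i j * y j)) {..<m} \<le> C * L2_set (\<lambda>j. cmod (y j)) {..<n})"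

lemma op_norm_le_iff_sq:
  "op_norm_le m n A C \<longleftrightarrow> 0 \<le> C \<and>
     (\<forall>y. (\<Sum>i<m. (cmod (\<Sum>j<n. A i j * y j))\<^sup>2) \<le> C\<^sup>2 * (\<Sum>j<n. (cmod (y j))\<^sup>2))"
proof -
  have "L2_set f I \<le> C * L2_set g J \<longleftrightarrow> (\<Sum>i\<in>I. (f i)\<^sup>2) \<le> C\<^sup>2 * (\<Sum>j\<in>J. (g j)\<^sup>2)"
    if "0 \<le> C" for f g :: "nat \<Rightarrow> real" and I J
  proof -
    have "L2_set f I \<le> C * L2_set g J \<longleftrightarrow> (L2_set f I)\<^sup>2 \<le> (C * L2_set g J)\<^sup>2"
      using that by (meson L2_set_nonneg mult_nonneg_nonneg power2_le_imp_le power_mono)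
    then show ?thesis by (simp add: power_mult_distrib L2_set_squared)
  qed
  then show ?thesis unfolding op_norm_le_def by auto
qed

lemma op_norm_le_sqD:
  "op_norm_le m n A C \<Longrightarrow> (\<Sum>i<m. (cmod (\<Sum>j<n. A i j * y j))\<^sup>2) \<le> C\<^sup>2 * (\<Sum>j<n. (cmod (y j))\<^sup>2)"
  unfolding op_norm_le_iff_sq by blast

lemma op_norm_le_nonneg: "op_norm_le m n A C \<Longrightarrow> 0 \<le> C"
  unfolding op_norm_le_def by blast

lemma op_norm_le_mono: "op_norm_le m n A C \<Longrightarrow> C \<le> C' \<Longrightarrow> op_norm_le m n A C'"
  unfolding op_norm_le_def by (meson L2_set_nonneg mult_right_mono order_trans)

lemma op_norm_le_cong:
  assumes "\<And>i j. i < m \<Longrightarrow> j < n \<Longrightarrow> A i j = A' i j"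
  shows "op_norm_le m n A C = op_norm_le m n A' C"
proof -
  have "L2_set (\<lambda>i. cmod (\<Sum>j<n. A i j * y j)) {..<m} = L2_set (\<lambda>i. cmod (\<Sum>j<n. A' i j * y j)) {..<m}"
    for y using assms by (intro L2_set_cong refl) simp
  then show ?thesis unfolding op_norm_le_def by simp
qed

lemma op_norm_le_diff:
  assumes "op_norm_le m n A C" "op_norm_le m n B D"
  shows "op_norm_le m n (A - B) (C + D)"
proof -
  have "L2_set (\<lambda>i. cmod (\<Sum>j<n. (A - B) i j * y j)) {..<m}
      \<le> (C + D) * L2_set (\<lambda>j. cmod (y j)) {..<n}" for y
  proof -
    have "L2_set (\<lambda>i. cmod (\<Sum>j<n. (A - B) i j * y j)) {..<m}
        \<le> L2_set (\<lambda>i. cmod (\<Sum>j<n. A i j * y j) + cmod (\<Sum>j<n. B i j * y j)) {..<m}"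
      by (rule L2_set_mono) (auto simp: left_diff_distrib sum_subtractf norm_triangle_ineq4)
    also have "\<dots> \<le> L2_set (\<lambda>i. cmod (\<Sum>j<n. A i j * y j)) {..<m}
        + L2_set (\<lambda>i. cmod (\<Sum>j<n. B i j * y j)) {..<m}"
      by (rule L2_set_triangle_ineq)
    also have "\<dots> \<le> C * L2_set (\<lambda>j. cmod (y j)) {..<n} + D * L2_set (\<lambda>j. cmod (y j)) {..<n}"
      using assms unfolding op_norm_le_def by (intro add_mono) auto
    finally show ?thesis by (simp add: algebra_simps)
  qed
  with assms show ?thesis unfolding op_norm_le_def by auto
qed

lemma op_norm_le_adjoint:
  assumes A: "op_norm_le m n A C"
  shows "op_norm_le n m (\<lambda>i j. cnj (A j i)) C"
proof -
  have "L2_set (\<lambda>j. cmod (\<Sum>i<m. cnj (A i j) * y i)) {..<n}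
      \<le> C * L2_set (\<lambda>i. cmod (y i)) {..<m}" for y
  proof -
    define w where "w = (\<lambda>j. \<Sum>i<m. cnj (A i j) * y i)"
    define W where "W = L2_set (\<lambda>j. cmod (w j)) {..<n}"
    define Y where "Y = L2_set (\<lambda>i. cmod (y i)) {..<m}"
    \<comment> \<open>||A^* y||^2 = <y, A A^* y> \<le> ||y|| C ||A^* y||\<close>
    have "complex_of_real (W\<^sup>2) = (\<Sum>j<n. w j * cnj (w j))"
      unfolding W_def L2_set_squared of_real_sum by (simp only: complex_norm_square)
    also have "\<dots> = (\<Sum>j<n. \<Sum>i<m. y i * (cnj (A i j) * cnj (w j)))"
      unfolding w_def by (simp add: sum_distrib_right mult_ac)
    also have "\<dots> = (\<Sum>i<m. y i * cnj (\<Sum>j<n. A i j * w j))"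
      by (subst sum.swap) (simp add: sum_distrib_left)
    finally have "W\<^sup>2 = cmod (\<Sum>i<m. y i * cnj (\<Sum>j<n. A i j * w j))"
      by (metis abs_power2 norm_of_real)
    also have "\<dots> \<le> (\<Sum>i<m. \<bar>cmod (y i)\<bar> * \<bar>cmod (\<Sum>j<n. A i j * w j)\<bar>)"
      by (rule order_trans[OF norm_sum]) (simp add: norm_mult del: cnj_sum)
    also have "\<dots> \<le> Y * L2_set (\<lambda>i. cmod (\<Sum>j<n. A i j * w j)) {..<m}"
      unfolding Y_def by (rule L2_set_mult_ineq)
    also have "\<dots> \<le> Y * (C * W)"
      using A unfolding op_norm_le_def W_def Y_def by (intro mult_left_mono) auto
    finally have "W * W \<le> (C * Y) * W" by (simp add: power2_eq_square mult_ac)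
    moreover have "0 \<le> W" "0 \<le> C * Y"
      using op_norm_le_nonneg[OF A] unfolding W_def Y_def by auto
    ultimately have "W \<le> C * Y"
      by (metis mult_right_le_imp_le order_le_less)
    then show ?thesis unfolding W_def w_def Y_def .
  qed
  with op_norm_le_nonneg[OF A] show ?thesis unfolding op_norm_le_def by auto
qed

lemma semiunitary_op_norm_le:
  assumes P: "P \<in> carrier_mat n r" and unitary: "cadj P * P = 1\<^sub>m r"
  shows "op_norm_le n r (\<lambda>i j. P $$ (i,j)) 1"
proof -
  have gram: "(\<Sum>i<n. cnj (P $$ (i,k)) * P $$ (i,j)) = (if k = j then 1 else 0)" if "k < r" "j < r" for k j
  proof -
    have "(\<Sum>i<n. cnj (P $$ (i,k)) * P $$ (i,j)) = (cadj P * P) $$ (k,j)"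
      using P that by (simp add: cadj_def scalar_prod_def atLeast0LessThan)
    then show ?thesis using unitary that by simp
  qed
  have "(\<Sum>i<n. (cmod (\<Sum>j<r. P $$ (i,j) * z j))\<^sup>2) = (\<Sum>j<r. (cmod (z j))\<^sup>2)" for z
  proof -
    have "complex_of_real (\<Sum>i<n. (cmod (\<Sum>j<r. P $$ (i,j) * z j))\<^sup>2)
        = (\<Sum>i<n. (\<Sum>j<r. P $$ (i,j) * z j) * cnj (\<Sum>k<r. P $$ (i,k) * z k))"
      unfolding of_real_sum by (simp only: complex_norm_square)
    also have "\<dots> = (\<Sum>k<r. \<Sum>j<r. z j * cnj (z k) * (\<Sum>i<n. cnj (P $$ (i,k)) * P $$ (i,j)))"
      by (simp add: sum_distrib_left sum_distrib_right mult_ac sum.swap[of _ "{..<n}"])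
    also have "\<dots> = (\<Sum>j<r. z j * cnj (z j))"
      by (simp add: gram if_distrib cong: if_cong)
    also have "\<dots> = complex_of_real (\<Sum>j<r. (cmod (z j))\<^sup>2)"
      unfolding of_real_sum by (simp only: complex_norm_square)
    finally show ?thesis using of_real_eq_iff by blast
  qed
  then show ?thesis unfolding op_norm_le_iff_sq by simp
qed

lemma vnorm_vec: "vnorm (vec n z) = L2_set (\<lambda>j. cmod (z j)) {..<n}"
  by (simp add: vnorm_def L2_set_def)

lemma vnorm_eq_L2_set: "vnorm x = L2_set (\<lambda>j. cmod (x $ j)) {..<dim_vec x}"
  by (simp add: vnorm_def L2_set_def)

lemma op_norm_bdd_above: "bdd_above {vnorm (D *\<^sub>v x) | x. x \<in> carrier_vec (dim_col D) \<and> vnorm x \<le> 1}"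
proof (rule bdd_aboveI)
  fix v assume "v \<in> {vnorm (D *\<^sub>v x) | x. x \<in> carrier_vec (dim_col D) \<and> vnorm x \<le> 1}"
  then obtain x where x: "x \<in> carrier_vec (dim_col D)" "vnorm x \<le> 1" and v: "v = vnorm (D *\<^sub>v x)"
    by blast
  have "cmod (x $ j) \<le> 1" if "j < dim_col D" for j
    using x that member_le_L2_set[of "{..<dim_vec x}" j "\<lambda>j. cmod (x $ j)"]
    by (simp add: vnorm_eq_L2_set)
  then have entry: "cmod ((D *\<^sub>v x) $ i) \<le> (\<Sum>j<dim_col D. cmod (D $$ (i,j)))" if "i < dim_row D" for i
    using x that
    by (auto simp: scalar_prod_def atLeast0LessThan norm_mult row_def
        intro!: order_trans[OF norm_sum] sum_mono mult_left_le)
  have "v \<le> (\<Sum>i<dim_row D. cmod ((D *\<^sub>v x) $ i))"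
    unfolding v vnorm_eq_L2_set dim_mult_mat_vec by (rule L2_set_le_sum) simp
  also have "\<dots> \<le> (\<Sum>i<dim_row D. \<Sum>j<dim_col D. cmod (D $$ (i,j)))"
    by (intro sum_mono entry) simp
  finally show "v \<le> (\<Sum>i<dim_row D. \<Sum>j<dim_col D. cmod (D $$ (i,j)))" .
qed

lemma vnorm_mult_mat_vec_le_op_norm:
  "x \<in> carrier_vec (dim_col D) \<Longrightarrow> vnorm x \<le> 1 \<Longrightarrow> vnorm (D *\<^sub>v x) \<le> op_norm D"
  unfolding op_norm_def by (rule cSup_upper[OF _ op_norm_bdd_above]) blast

lemma op_norm_nonneg: "0 \<le> op_norm D"
proof -
  have "vnorm (D *\<^sub>v 0\<^sub>v (dim_col D)) = 0"
    by (simp add: vnorm_def scalar_prod_def)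
  then show ?thesis
    using vnorm_mult_mat_vec_le_op_norm[of "0\<^sub>v (dim_col D)" D] by (simp add: vnorm_def)
qed

lemma op_norm_le_op_norm:
  assumes D: "D \<in> carrier_mat m n"
  shows "op_norm_le m n (\<lambda>i j. D $$ (i,j)) (op_norm D)"
proof -
  have "L2_set (\<lambda>i. cmod (\<Sum>j<n. D $$ (i,j) * z j)) {..<m}
      \<le> op_norm D * L2_set (\<lambda>j. cmod (z j)) {..<n}" for z
  proof (cases "L2_set (\<lambda>j. cmod (z j)) {..<n} = 0")
    case True
    then have "z j = 0" if "j < n" for j using that by (simp add: L2_set_eq_0_iff)
    then show ?thesis by (simp add: L2_set_0')
  next
    case False
    define N where "N = L2_set (\<lambda>j. cmod (z j)) {..<n}"
    have N: "0 < N" using False L2_set_nonneg unfolding N_def by (metis order_le_less)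
    define x where "x = vec n (\<lambda>j. z j / complex_of_real N)"
    have "vnorm x = L2_set (\<lambda>j. cmod (z j) * (1 / N)) {..<n}"
      unfolding x_def vnorm_vec using N by (simp add: norm_divide)
    also have "\<dots> = N * (1 / N)"
      unfolding N_def by (rule L2_set_left_distrib[symmetric]) simp
    also have "\<dots> = 1" using N by simp
    finally have "vnorm (D *\<^sub>v x) \<le> op_norm D"
      using D by (intro vnorm_mult_mat_vec_le_op_norm) (auto simp: x_def)
    moreover have "vnorm (D *\<^sub>v x) = L2_set (\<lambda>i. cmod (\<Sum>j<n. D $$ (i,j) * z j)) {..<m} * (1 / N)"
      using D N unfolding vnorm_eq_L2_set
      by (subst L2_set_left_distrib)
         (auto intro!: L2_set_cong simp: x_def scalar_prod_def atLeast0LessThan row_def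
           norm_divide sum_divide_distrib[symmetric])
    ultimately show ?thesis using N by (simp add: N_def field_simps)
  qed
  then show ?thesis unfolding op_norm_le_def by (simp add: op_norm_nonneg)
qed

lemma op_norm_le_adjoint_of_op_norm_le:
  "D \<in> carrier_mat m n \<Longrightarrow> op_norm D \<le> e \<Longrightarrow> op_norm_le n m (\<lambda>i j. cnj (D $$ (j,i))) e"
  by (intro op_norm_le_adjoint op_norm_le_mono[OF op_norm_le_op_norm])

definition frob_sq :: "nat \<Rightarrow> nat \<Rightarrow> nat \<Rightarrow> (nat \<Rightarrow> nat \<Rightarrow> nat \<Rightarrow> complex) \<Rightarrow> real" where
  "frob_sq d1 d2 d3 X = (\<Sum>i<d1. \<Sum>j<d2. \<Sum>k<d3. (cmod (X i j k))\<^sup>2)"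

lemma frob_tensor_eq_sqrt_frob_sq: "frob_tensor d X = sqrt (frob_sq d d d X)"
  unfolding frob_tensor_def frob_sq_def ..

lemma sum_rotate3: "(\<Sum>i\<in>I. \<Sum>j\<in>J. \<Sum>k\<in>K. f i j k) = (\<Sum>j\<in>J. \<Sum>k\<in>K. \<Sum>i\<in>I. f i j k)"
  by (subst sum.swap) (simp add: sum.swap[of _ I])

lemma frob_sq_mode1_le:
  assumes "op_norm_le r n A C"
  shows "frob_sq r d2 d3 (\<lambda>i j k. \<Sum>l<n. A i l * X l j k) \<le> C\<^sup>2 * frob_sq n d2 d3 X"
proof -
  have "frob_sq r d2 d3 (\<lambda>i j k. \<Sum>l<n. A i l * X l j k)
      = (\<Sum>j<d2. \<Sum>k<d3. \<Sum>i<r. (cmod (\<Sum>l<n. A i l * X l j k))\<^sup>2)"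
    unfolding frob_sq_def by (rule sum_rotate3)
  also have "\<dots> \<le> (\<Sum>j<d2. \<Sum>k<d3. C\<^sup>2 * (\<Sum>l<n. (cmod (X l j k))\<^sup>2))"
    by (intro sum_mono op_norm_le_sqD[OF assms])
  also have "\<dots> = C\<^sup>2 * frob_sq n d2 d3 X"
    by (simp only: frob_sq_def sum_distrib_left) (rule sum_rotate3[symmetric])
  finally show ?thesis .
qed

lemma frob_sq_mode2_le:
  assumes "op_norm_le r n A C"
  shows "frob_sq d1 r d3 (\<lambda>i j k. \<Sum>l<n. A j l * X i l k) \<le> C\<^sup>2 * frob_sq d1 n d3 X"
proof -
  have "frob_sq d1 r d3 (\<lambda>i j k. \<Sum>l<n. A j l * X i l k)
      = (\<Sum>i<d1. \<Sum>k<d3. \<Sum>j<r. (cmod (\<Sum>l<n. A j l * X i l k))\<^sup>2)"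
    unfolding frob_sq_def by (intro sum.cong refl sum.swap)
  also have "\<dots> \<le> (\<Sum>i<d1. \<Sum>k<d3. C\<^sup>2 * (\<Sum>l<n. (cmod (X i l k))\<^sup>2))"
    by (intro sum_mono op_norm_le_sqD[OF assms])
  also have "\<dots> = C\<^sup>2 * frob_sq d1 n d3 X"
    unfolding frob_sq_def sum_distrib_left by (intro sum.cong refl sum.swap)
  finally show ?thesis .
qed

lemma frob_sq_mode3_le:
  assumes "op_norm_le r n A C"
  shows "frob_sq d1 d2 r (\<lambda>i j k. \<Sum>l<n. A k l * X i j l) \<le> C\<^sup>2 * frob_sq d1 d2 n X"
proof -
  have "frob_sq d1 d2 r (\<lambda>i j k. \<Sum>l<n. A k l * X i j l)
      \<le> (\<Sum>i<d1. \<Sum>j<d2. C\<^sup>2 * (\<Sum>l<n. (cmod (X i j l))\<^sup>2))"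
    unfolding frob_sq_def by (intro sum_mono op_norm_le_sqD[OF assms])
  also have "\<dots> = C\<^sup>2 * frob_sq d1 d2 n X"
    unfolding frob_sq_def sum_distrib_left by simp
  finally show ?thesis .
qed

definition multilin_mult ::
  "nat \<Rightarrow> (nat \<Rightarrow> nat \<Rightarrow> complex) \<Rightarrow> (nat \<Rightarrow> nat \<Rightarrow> complex) \<Rightarrow> (nat \<Rightarrow> nat \<Rightarrow> complex)
    \<Rightarrow> (nat \<Rightarrow> nat \<Rightarrow> nat \<Rightarrow> complex) \<Rightarrow> nat \<Rightarrow> nat \<Rightarrow> nat \<Rightarrow> complex" where
  "multilin_mult n A1 A2 A3 X i1 i2 i3 =
     (\<Sum>j1<n. \<Sum>j2<n. \<Sum>j3<n. A1 i1 j1 * A2 i2 j2 * A3 i3 j3 * X j1 j2 j3)"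

lemma frob_tensor_multilin_mult_le:
  assumes A1: "op_norm_le r n A1 C1" and A2: "op_norm_le r n A2 C2" and A3: "op_norm_le r n A3 C3"
  shows "frob_tensor r (multilin_mult n A1 A2 A3 X) \<le> C1 * C2 * C3 * frob_tensor n X"
proof -
  define Y3 where "Y3 = (\<lambda>i j k. \<Sum>l<n. A3 k l * X i j l)"
  define Y2 where "Y2 = (\<lambda>i j k. \<Sum>l<n. A2 j l * Y3 i l k)"
  have "multilin_mult n A1 A2 A3 X = (\<lambda>i j k. \<Sum>l<n. A1 i l * Y2 l j k)"
    by (simp add: fun_eq_iff multilin_mult_def Y2_def Y3_def sum_distrib_left mult.assoc)
  then have "frob_sq r r r (multilin_mult n A1 A2 A3 X) \<le> C1\<^sup>2 * frob_sq n r r Y2"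
    using frob_sq_mode1_le[OF A1] by simp
  also have "\<dots> \<le> C1\<^sup>2 * (C2\<^sup>2 * frob_sq n n r Y3)"
    unfolding Y2_def by (intro mult_left_mono frob_sq_mode2_le[OF A2]) auto
  also have "\<dots> \<le> C1\<^sup>2 * (C2\<^sup>2 * (C3\<^sup>2 * frob_sq n n n X))"
    unfolding Y3_def by (intro mult_left_mono frob_sq_mode3_le[OF A3]) auto
  finally have "frob_sq r r r (multilin_mult n A1 A2 A3 X) \<le> (C1 * C2 * C3)\<^sup>2 * frob_sq n n n X"
    by (simp add: power_mult_distrib mult_ac)
  then have "frob_tensor r (multilin_mult n A1 A2 A3 X) \<le> sqrt ((C1 * C2 * C3)\<^sup>2 * frob_sq n n n X)"
    unfolding frob_tensor_eq_sqrt_frob_sq by (rule real_sqrt_le_mono)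
  also have "\<dots> = C1 * C2 * C3 * frob_tensor n X"
    using op_norm_le_nonneg[OF A1] op_norm_le_nonneg[OF A2] op_norm_le_nonneg[OF A3]
    by (simp add: real_sqrt_mult frob_tensor_eq_sqrt_frob_sq)
  finally show ?thesis .
qed

lemma frob_tensor_nonneg: "0 \<le> frob_tensor d X"
  unfolding frob_tensor_def by (intro real_sqrt_ge_zero sum_nonneg) auto

lemma frob_tensor_cong:
  "(\<And>i j k. i < d \<Longrightarrow> j < d \<Longrightarrow> k < d \<Longrightarrow> X i j k = Y i j k) \<Longrightarrow> frob_tensor d X = frob_tensor d Y"
  unfolding frob_tensor_def by (auto intro!: sum.cong arg_cong[where f = sqrt])

lemma frob_tensor_eq_L2_set:
  "frob_tensor d X = L2_set (\<lambda>(i, j, k). cmod (X i j k)) ({..<d} \<times> {..<d} \<times> {..<d})"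
  unfolding frob_tensor_def L2_set_def by (simp add: sum.cartesian_product split_def)

lemma frob_tensor_add_le: "frob_tensor d (X + Y) \<le> frob_tensor d X + frob_tensor d Y"
  unfolding frob_tensor_eq_L2_set
  by (rule order_trans[OF L2_set_mono L2_set_triangle_ineq]) (auto simp: norm_triangle_ineq)

lemma frob_tensor_sum_le:
  "finite L \<Longrightarrow> frob_tensor d (\<lambda>i j k. \<Sum>l\<in>L. X l i j k) \<le> (\<Sum>l\<in>L. frob_tensor d (X l))"
proof (induction L rule: finite_induct)
  case empty
  then show ?case by (simp add: frob_tensor_def)
next
  case (insert l L)
  have "(\<lambda>i j k. \<Sum>l'\<in>insert l L. X l' i j k) = X l + (\<lambda>i j k. \<Sum>l'\<in>L. X l' i j k)"
    using insert.hyps by (simp add: fun_eq_iff)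
  then have "frob_tensor d (\<lambda>i j k. \<Sum>l'\<in>insert l L. X l' i j k)
      \<le> frob_tensor d (X l) + frob_tensor d (\<lambda>i j k. \<Sum>l'\<in>L. X l' i j k)"
    by (simp add: frob_tensor_add_le)
  also have "\<dots> \<le> frob_tensor d (X l) + (\<Sum>l'\<in>L. frob_tensor d (X l'))"
    using insert.IH by simp
  finally show ?case using insert.hyps by simp
qed

lemma frob_tensor_rank_one:
  "frob_tensor n (\<lambda>i j k. u i * u j * u k) = L2_set (\<lambda>i. cmod (u i)) {..<n} ^ 3"
proof -
  have "(\<Sum>i<n. \<Sum>j<n. \<Sum>k<n. (cmod (u i * u j * u k))\<^sup>2) = (\<Sum>i<n. (cmod (u i))\<^sup>2) ^ 3"
    by (simp add: norm_mult power_mult_distrib sum_distrib_left sum_distrib_right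
        power3_eq_cube mult_ac)
  then show ?thesis by (simp add: frob_tensor_def L2_set_def real_sqrt_power)
qed

lemma frob_tensor_sum_cubes_le_frob_mat:
  assumes "U \<in> carrier_mat r n"
  shows "frob_tensor n (\<lambda>i j k. \<Sum>l<r. U $$ (l,i) * U $$ (l,j) * U $$ (l,k)) \<le> frob_mat U ^ 3"
proof -
  define \<rho> where "\<rho> = (\<lambda>l. L2_set (\<lambda>i. cmod (U $$ (l,i))) {..<n})"
  have frob: "frob_mat U = L2_set \<rho> {..<r}"
    using assms by (simp add: frob_mat_def L2_set_def \<rho>_def sum_nonneg)
  have "frob_tensor n (\<lambda>i j k. \<Sum>l<r. U $$ (l,i) * U $$ (l,j) * U $$ (l,k))
      \<le> (\<Sum>l<r. frob_tensor n (\<lambda>i j k. U $$ (l,i) * U $$ (l,j) * U $$ (l,k)))"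
    by (rule frob_tensor_sum_le) simp
  also have "\<dots> = (\<Sum>l<r. (\<rho> l)\<^sup>2 * \<rho> l)"
    by (simp add: frob_tensor_rank_one \<rho>_def power2_eq_square power3_eq_cube)
  also have "\<dots> \<le> (\<Sum>l<r. (\<rho> l)\<^sup>2 * frob_mat U)"
    unfolding frob by (intro sum_mono mult_left_mono member_le_L2_set) auto
  also have "\<dots> = (L2_set \<rho> {..<r})\<^sup>2 * frob_mat U"
    by (simp add: L2_set_squared sum_distrib_right)
  also have "\<dots> = frob_mat U ^ 3"
    by (simp add: frob power2_eq_square power3_eq_cube)
  finally show ?thesis .
qed

lemma frob_tensor_le_kappa_powr:
  assumes "U \<in> carrier_mat r n"
    and "\<forall>i<n. \<forall>j<n. \<forall>k<n. T i j k = (\<Sum>l<r. U $$ (l,i) * U $$ (l,j) * U $$ (l,k))"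
    and "kappa U \<le> B"
  shows "frob_tensor n T \<le> B powr (3/2)"
proof -
  have frob_nonneg: "0 \<le> frob_mat U"
    by (simp add: frob_mat_def sum_nonneg)
  have frob_sq_le: "(frob_mat U)\<^sup>2 \<le> B"
    using assms(3) zero_le_power2[of "frob_mat (pinv U)"] unfolding kappa_def by linarith
  have "frob_tensor n T \<le> frob_mat U ^ 3"
    using frob_tensor_sum_cubes_le_frob_mat[OF assms(1)] frob_tensor_cong[of n T] assms(2) by simp
  also have "\<dots> = sqrt ((frob_mat U)\<^sup>2 ^ 3)"
    by (subst real_sqrt_power) (simp add: frob_nonneg)
  also have "\<dots> \<le> sqrt (B ^ 3)"
    using frob_sq_le by (intro real_sqrt_le_mono power_mono) auto
  also have "\<dots> = B powr (3/2)"
    using order_trans[OF zero_le_power2 frob_sq_le] by (simp add: powr_half_sqrt_powr)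
  finally show ?thesis .
qed

lemma multilin_mult_diff_telescope:
  "multilin_mult n A A A X - multilin_mult n A' A' A' X' =
     multilin_mult n (A - A') A A X + multilin_mult n A' (A - A') A X
   + multilin_mult n A' A' (A - A') X + multilin_mult n A' A' A' (X - X')"
proof (intro ext)
  fix i j k
  have "(multilin_mult n A A A X - multilin_mult n A' A' A' X') i j k =
      (\<Sum>j1<n. \<Sum>j2<n. \<Sum>j3<n.
         A i j1 * A j j2 * A k j3 * X j1 j2 j3 - A' i j1 * A' j j2 * A' k j3 * X' j1 j2 j3)"
    by (simp add: multilin_mult_def sum_subtractf)
  also have "\<dots> = (multilin_mult n (A - A') A A X + multilin_mult n A' (A - A') A X
      + multilin_mult n A' A' (A - A') X + multilin_mult n A' A' A' (X - X')) i j k"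
    by (simp add: multilin_mult_def flip: sum.distrib) (simp add: algebra_simps)
  finally show "(multilin_mult n A A A X - multilin_mult n A' A' A' X') i j k = \<dots>" .
qed

lemma frob_tensor_multilin_mult_perturb_le:
  assumes A: "op_norm_le r n A 1" and D: "op_norm_le r n (A - A') e"
    and X: "frob_tensor n (X - X') \<le> \<delta>"
  shows "frob_tensor r (multilin_mult n A A A X - multilin_mult n A' A' A' X')
         \<le> ((1 + e) ^ 3 - 1) * frob_tensor n X + (1 + e) ^ 3 * \<delta>"
proof -
  have A': "op_norm_le r n A' (1 + e)"
    using op_norm_le_diff[OF A D] by simp
  have "0 \<le> e" using D by (rule op_norm_le_nonneg)
  have triangle4: "frob_tensor r (Y1 + Y2 + Y3 + Y4)
      \<le> frob_tensor r Y1 + frob_tensor r Y2 + frob_tensor r Y3 + frob_tensor r Y4" for Y1 Y2 Y3 Y4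
    using frob_tensor_add_le[of r "Y1 + Y2 + Y3" Y4] frob_tensor_add_le[of r "Y1 + Y2" Y3]
      frob_tensor_add_le[of r Y1 Y2] by linarith
  have "frob_tensor r (multilin_mult n A A A X - multilin_mult n A' A' A' X')
      \<le> e * 1 * 1 * frob_tensor n X + (1 + e) * e * 1 * frob_tensor n X
        + (1 + e) * (1 + e) * e * frob_tensor n X + (1 + e) * (1 + e) * (1 + e) * frob_tensor n (X - X')"
    unfolding multilin_mult_diff_telescope
    by (rule order_trans[OF triangle4])
       (intro add_mono frob_tensor_multilin_mult_le A A' D)
  also have "\<dots> \<le> e * 1 * 1 * frob_tensor n X + (1 + e) * e * 1 * frob_tensor n X
        + (1 + e) * (1 + e) * e * frob_tensor n X + (1 + e) * (1 + e) * (1 + e) * \<delta>"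
    using X \<open>0 \<le> e\<close> by simp
  also have "\<dots> = ((1 + e) ^ 3 - 1) * frob_tensor n X + (1 + e) ^ 3 * \<delta>"
    by (simp add: algebra_simps power3_eq_cube)
  finally show ?thesis .
qed

lemma cube_perturbation_factor_le:
  fixes e F \<delta> :: real
  assumes "0 \<le> e" "e < 1" "0 \<le> F" "0 \<le> \<delta>"
  shows "((1 + e) ^ 3 - 1) * F + (1 + e) ^ 3 * \<delta> \<le> 7 * e * F + 8 * \<delta>"
proof -
  have "(1 + e) ^ 3 - 1 = e * (3 + 3 * e + e\<^sup>2)"
    by (simp add: algebra_simps power3_eq_cube power2_eq_square)
  also have "\<dots> \<le> e * 7"
    using assms mult_le_one[of e e] by (intro mult_left_mono) (auto simp: power2_eq_square)
  finally have "((1 + e) ^ 3 - 1) * F \<le> (e * 7) * F"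
    using assms by (intro mult_right_mono)
  moreover have "(1 + e) ^ 3 * \<delta> \<le> 2 ^ 3 * \<delta>"
    using assms by (intro mult_right_mono power_mono) auto
  ultimately show ?thesis by (simp add: mult.commute)
qed

lemma tensor_act3_cconj_mat:
  assumes "M \<in> carrier_mat n r" "i1 < r" "i2 < r" "i3 < r"
  shows "tensor_act3 (cconj_mat M) X i1 i2 i3 =
    multilin_mult n (\<lambda>i j. cnj (M $$ (j,i))) (\<lambda>i j. cnj (M $$ (j,i)))
      (\<lambda>i j. cnj (M $$ (j,i))) X i1 i2 i3"
  using assms unfolding tensor_act3_def multilin_mult_def cconj_mat_def by (auto intro!: sum.cong)

theorem lemma5p7:
  fixes n r :: nat and U P P' :: "complex mat"
    and T T' :: "nat \<Rightarrow> nat \<Rightarrow> nat \<Rightarrow> complex"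
    and B \<delta> \<epsilon>1 :: real
  assumes U_dim: "U \<in> carrier_mat r n"
    and T_decomp: "\<forall>i<n. \<forall>j<n. \<forall>k<n. T i j k = (\<Sum>l<r. U $$ (l,i) * U $$ (l,j) * U $$ (l,k))"
    and U_indep: "\<forall>c :: nat \<Rightarrow> complex.
        (\<forall>j<n. (\<Sum>l<r. c l * U $$ (l,j)) = 0) \<longrightarrow> (\<forall>l<r. c l = 0)"
    and kappa_bound: "kappa U \<le> B"
    and TT': "frob_tensor n (\<lambda>i j k. T i j k - T' i j k) \<le> \<delta>"
    and P_dim: "P \<in> carrier_mat n r"
    and P_semiunitary: "cadj P * P = 1\<^sub>m r"
    and P_span: "{P *\<^sub>v x | x. x \<in> carrier_vec r} =
        {vec n (\<lambda>j. \<Sum>l<r. c l * U $$ (l,j)) | c :: nat \<Rightarrow> complex. True}"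
    and P'_dim: "P' \<in> carrier_mat n r"
    and PP': "op_norm (P - P') \<le> \<epsilon>1"
    and eps_lt: "\<epsilon>1 < 1"
  shows "frob_tensor r (\<lambda>i j k. tensor_act3 (cconj_mat P) T i j k - tensor_act3 (cconj_mat P') T' i j k)
         \<le> 7 * \<epsilon>1 * real r powr (7/2) * B powr (3/2) + 8 * \<delta> * real r powr (3/2)"
proof (cases "r = 0")
  case True
  then show ?thesis by (simp add: frob_tensor_def)
next
  case False
  define A where "A = (\<lambda>i j. cnj (P $$ (j,i)))"
  define A' where "A' = (\<lambda>i j. cnj (P' $$ (j,i)))"
  have A_bound: "op_norm_le r n A 1"
    unfolding A_def by (rule op_norm_le_adjoint[OF semiunitary_op_norm_le[OF P_dim P_semiunitary]])
  have A_diff_bound: "op_norm_le r n (A - A') \<epsilon>1"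
    using op_norm_le_adjoint_of_op_norm_le[OF minus_carrier_mat[OF P'_dim] PP'] P_dim P'_dim
    by (subst op_norm_le_cong[where A' = "\<lambda>i j. cnj ((P - P') $$ (j,i))"])
      (auto simp: A_def A'_def)
  have nonneg: "0 \<le> \<epsilon>1" "0 \<le> \<delta>"
    using PP' TT' op_norm_nonneg frob_tensor_nonneg by (auto intro: order_trans)
  have r_powr: "1 \<le> real r powr (7/2)" "1 \<le> real r powr (3/2)"
    using False by (auto intro: ge_one_powr_ge_zero)
  note T_bound = frob_tensor_le_kappa_powr[OF U_dim T_decomp kappa_bound]
  have "frob_tensor r (\<lambda>i j k. tensor_act3 (cconj_mat P) T i j k - tensor_act3 (cconj_mat P') T' i j k)
      = frob_tensor r (multilin_mult n A A A T - multilin_mult n A' A' A' T')"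
    using P_dim P'_dim by (intro frob_tensor_cong) (simp add: tensor_act3_cconj_mat A_def A'_def)
  also have "\<dots> \<le> ((1 + \<epsilon>1) ^ 3 - 1) * frob_tensor n T + (1 + \<epsilon>1) ^ 3 * \<delta>"
    using A_bound A_diff_bound TT'
    by (intro frob_tensor_multilin_mult_perturb_le) (auto simp: fun_diff_def)
  also have "\<dots> \<le> 7 * \<epsilon>1 * frob_tensor n T + 8 * \<delta>"
    using nonneg eps_lt by (intro cube_perturbation_factor_le frob_tensor_nonneg) auto
  also have "\<dots> \<le> 7 * \<epsilon>1 * (real r powr (7/2) * B powr (3/2)) + 8 * \<delta> * real r powr (3/2)"
    using T_bound nonneg mult_right_mono[OF r_powr(1), of "B powr (3/2)"]
      mult_left_mono[OF r_powr(2) nonneg(2)]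
    by (intro add_mono mult_left_mono) auto
  finally show ?thesis by (simp add: mult.assoc)
qed

end
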